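(* Suppose every request of the input $\sigma$ is a triggering request with respect to ALG run on $\sigma$. Let $t$ be any time and let $R$ be the set of indices of requests that have arrived by time $t$ and are pending in ALG at time $t$. For $k\in R$ let $x_k$ denote the position of $e_k$ in ALG's list at time $t$. Then the positions $x_k$, $k\in R$, are pairwise distinct; writing $R=\{k_1,\dots,k_d\}$ with $1\le x_{k_1}<x_{k_2}<\dots<x_{k_d}\le n$, we have: (1) $q_{k_\ell}\le q_{k_{\ell+1}}$ for every $\ell\in[d-1]$, i.e. ALG serves $r_{k_\ell}$ no later than $r_{k_{\ell+1}}$; (2) $2x_{k_\ell}\le x_{k_{\ell+1}}$ for every $\ell\in[d-1]$; (3) $d\le\log_2 n+1$.
   Context: List Update with Time Windows. A set $\mathbb{E}$ of $n$ elements is kept in an ordered list (position $1$ is the head). An input $\sigma$ is a sequence of requests $r_1,\dots,r_m$; request $r_k$ specifies an element $e_k\in\mathbb{E}$, an arrival time $a_k$ and a deadline $q_k\ge a_k$. An algorithm may perform an access up to position $i$ at cost $i$, serving every pending request whose element currently lies in positions $1,\dots,i$, and may swap adjacent elements at cost $1$; actions are instantaneous; every request must be served within $[a_k,q_k]$. Algorithm ALG: whenever the current time equals the deadline of at least one pending request, let the triggering element be the element at the largest current position among those elements having a pending request whose deadline is the current time, and let $i$ be its position. ALG accesses the first $\min(2i-1,n)$ positions and then moves the triggering element to the front by $i-1$ adjacent swaps. At each such event the triggering request is one (arbitrarily fixed) pending request for the triggering element whose deadline is the current time. A request of $\sigma$ is a triggering request if it is the triggering request of some event of ALG on $\sigma$.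 *)

theory Defs
  imports Complex_Main
begin

text \<open>The list of elements is an 'a list (distinct),
position 1 is the head.  Requests are indexed by k < m; request k has element e k,
arrival time a k and deadline q k (times are reals).  A state of ALG is a pair (L, S)
of the current list and the set of indices of requests already served.\<close>

fun pos :: "'a list \<Rightarrow> 'a \<Rightarrow> nat" where
  "pos [] x = 0"
| "pos (y # ys) x = (if y = x then 1 else Suc (pos ys x))"

definition pending :: "(nat \<Rightarrow> real) \<Rightarrow> nat \<Rightarrow> nat set \<Rightarrow> real \<Rightarrow> nat set" where
  "pending a m S tau = {k. k < m \<and> a k \<le> tau \<and> k \<notin> S}"

definition due :: "(nat \<Rightarrow> real) \<Rightarrow> (nat \<Rightarrow> real) \<Rightarrow> nat \<Rightarrow> nat set \<Rightarrow> real \<Rightarrow> nat set" where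
  "due a q m S tau = {k \<in> pending a m S tau. q k = tau}"

definition trig_pos :: "(nat \<Rightarrow> 'a) \<Rightarrow> (nat \<Rightarrow> real) \<Rightarrow> (nat \<Rightarrow> real) \<Rightarrow> nat
    \<Rightarrow> 'a list \<times> nat set \<Rightarrow> real \<Rightarrow> nat" where
  "trig_pos e a q m st tau = Max ((\<lambda>k. pos (fst st) (e k)) ` due a q m (snd st) tau)"

definition trig_elem :: "(nat \<Rightarrow> 'a) \<Rightarrow> (nat \<Rightarrow> real) \<Rightarrow> (nat \<Rightarrow> real) \<Rightarrow> nat
    \<Rightarrow> 'a list \<times> nat set \<Rightarrow> real \<Rightarrow> 'a" where
  "trig_elem e a q m st tau = fst st ! (trig_pos e a q m st tau - 1)"

definition alg_step :: "(nat \<Rightarrow> 'a) \<Rightarrow> (nat \<Rightarrow> real) \<Rightarrow> (nat \<Rightarrow> real) \<Rightarrow> nat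
    \<Rightarrow> real \<Rightarrow> 'a list \<times> nat set \<Rightarrow> 'a list \<times> nat set" where
  "alg_step e a q m tau st =
     (if due a q m (snd st) tau = {} then st
      else (let L = fst st; S = snd st;
                i = trig_pos e a q m st tau;
                x = trig_elem e a q m st tau
            in (x # remove1 x L,
                S \<union> {k \<in> pending a m S tau. pos L (e k) \<le> min (2 * i - 1) (length L)})))"

text \<open>The distinct deadlines in increasing order (the only times ALG acts).\<close>
definition deadlines :: "(nat \<Rightarrow> real) \<Rightarrow> nat \<Rightarrow> real list" where
  "deadlines q m = sorted_list_of_set (q ` {..<m})"

definition state_after :: "(nat \<Rightarrow> 'a) \<Rightarrow> (nat \<Rightarrow> real) \<Rightarrow> (nat \<Rightarrow> real) \<Rightarrow> nat
    \<Rightarrow> 'a list \<Rightarrow> real \<Rightarrow> 'a list \<times> nat set" where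
  "state_after e a q m L0 t = fold (alg_step e a q m) (filter (\<lambda>tau. tau \<le> t) (deadlines q m)) (L0, {})"

definition state_before :: "(nat \<Rightarrow> 'a) \<Rightarrow> (nat \<Rightarrow> real) \<Rightarrow> (nat \<Rightarrow> real) \<Rightarrow> nat
    \<Rightarrow> 'a list \<Rightarrow> real \<Rightarrow> 'a list \<times> nat set" where
  "state_before e a q m L0 t = fold (alg_step e a q m) (filter (\<lambda>tau. tau < t) (deadlines q m)) (L0, {})"

text \<open>Triggering requests: ch is the fixed (arbitrary) rule choosing, at time tau, one
request among the pending requests for the triggering element with deadline tau.\<close>
definition triggering :: "(nat \<Rightarrow> 'a) \<Rightarrow> (nat \<Rightarrow> real) \<Rightarrow> (nat \<Rightarrow> real) \<Rightarrow> nat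
    \<Rightarrow> 'a list \<Rightarrow> (real \<Rightarrow> nat set \<Rightarrow> nat) \<Rightarrow> nat set" where
  "triggering e a q m L0 ch =
     {ch tau {k \<in> due a q m (snd (state_before e a q m L0 tau)) tau.
                e k = trig_elem e a q m (state_before e a q m L0 tau) tau}
      | tau. tau \<in> q ` {..<m} \<and> due a q m (snd (state_before e a q m L0 tau)) tau \<noteq> {}}"

end

theory Submission imports Defs begin

text \<open>If every request is triggering, request k is served exactly at its deadline q k by the
event it triggers; in particular deadlines are pairwise distinct. An event with trigger position i
serves every pending request up to position 2i - 1 and only moves the trigger to the front, so
an event that leaves a request pending has its trigger strictly in front of that request's
element: a request pending at time t keeps its element, and everything behind it, in place
until its deadline. Write x k for the position of e k at time t and let x k < x k'. The event
at q k' cannot precede q k, as it would move e k' to the front. The event at q k is triggered at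
position x k and serves positions up to 2 x k - 1, so x k' \<ge> 2 x k. Positions that at least
double inside {1..n} number at most log2 n + 1.\<close>

lemma pos_gt_0: "y \<in> set L \<Longrightarrow> 0 < pos L y"
  by (induction L) auto

lemma pos_le_length: "y \<in> set L \<Longrightarrow> pos L y \<le> length L"
  by (induction L) auto

lemma nth_pos: "y \<in> set L \<Longrightarrow> L ! (pos L y - 1) = y"
  by (induction L) (auto simp: nth_Cons' dest: pos_gt_0)

lemma pos_eq_iff: "x \<in> set L \<Longrightarrow> y \<in> set L \<Longrightarrow> pos L x = pos L y \<longleftrightarrow> x = y"
  by (metis nth_pos)

lemma pos_remove1:
  "distinct L \<Longrightarrow> x \<in> set L \<Longrightarrow> pos L x < pos L y \<Longrightarrow> pos (remove1 x L) y = pos L y - 1"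
proof (induction L)
  case (Cons z zs)
  then show ?case by (cases "z = x") (auto dest: pos_gt_0)
qed simp

lemma filter_sorted_split:
  assumes "sorted D" and down: "\<And>x y. x \<le> y \<Longrightarrow> P y \<Longrightarrow> P x" and "\<And>x. P x \<Longrightarrow> Q x"
  shows "filter Q D = filter P D @ filter (\<lambda>x. Q x \<and> \<not> P x) D"
  using assms(1)
proof (induction D)
  case (Cons z zs)
  show ?case
  proof (cases "P z")
    case True
    then show ?thesis using Cons assms(3) by simp
  next
    case False
    then have "\<forall>y\<in>set (z # zs). \<not> P y" using Cons.prems down by auto
    then show ?thesis by (auto simp: filter_empty_conv intro: filter_cong)
  qed
qed simp

lemma filter_eq_singleton: "distinct xs \<Longrightarrow> x \<in> set xs \<Longrightarrow> filter (\<lambda>y. y = x) xs = [x]"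
  by (induction xs) (auto simp: filter_empty_conv)

lemma two_pow_card_le_Max:
  fixes A :: "nat set"
  assumes "finite A" "A \<noteq> {}" "0 \<notin> A"
    and doubling: "\<And>u v. u \<in> A \<Longrightarrow> v \<in> A \<Longrightarrow> u < v \<Longrightarrow> 2 * u \<le> v"
  shows "2 ^ (card A - 1) \<le> Max A"
  using assms
proof (induction "card A - 1" arbitrary: A)
  case 0
  then have "Max A \<noteq> 0" using Max_in by metis
  moreover have "2 ^ (card A - 1) = (1::nat)" using "0.hyps" by (metis power_0)
  ultimately show ?case by simp
next
  case (Suc c)
  define A' where "A' = A - {Max A}"
  have "card A' = Suc c" "finite A'"
    using Suc.hyps(2) Suc.prems(1,2) by (auto simp: A'_def card_Diff_singleton)
  then have "card A' - 1 = c" "A' \<noteq> {}" by auto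
  then have "2 ^ c \<le> Max A'"
    using Suc.hyps(1)[of A'] Suc.prems(3,4) \<open>finite A'\<close> by (auto simp: A'_def)
  moreover have "Max A' \<in> A" "Max A' < Max A"
    using \<open>finite A'\<close> \<open>A' \<noteq> {}\<close> Max_in[of A'] Max_ge[OF Suc.prems(1)]
    by (auto simp: A'_def order.order_iff_strict)
  then have "2 * Max A' \<le> Max A" using Suc.prems(1,2,4) by simp
  ultimately have "2 ^ Suc c \<le> Max A" by simp
  then show ?case by (metis Suc.hyps(2))
qed

lemma card_le_log_if_doubling:
  fixes A :: "nat set"
  assumes "finite A" "A \<subseteq> {1..n}"
    and doubling: "\<And>u v. u \<in> A \<Longrightarrow> v \<in> A \<Longrightarrow> u < v \<Longrightarrow> 2 * u \<le> v"
  shows "real (card A) \<le> log 2 (real n) + 1"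
proof (cases "A = {}")
  case True
  then show ?thesis by (cases "n = 0") (auto simp: log_def)
next
  case False
  have "0 \<notin> A" using assms(2) by auto
  have "2 ^ (card A - 1) \<le> Max A"
    using two_pow_card_le_Max[OF assms(1) False \<open>0 \<notin> A\<close> doubling] .
  also have "Max A \<le> n" using assms(1,2) False by auto
  finally have "(2::real) ^ (card A - 1) \<le> real n"
    by (metis of_nat_le_iff of_nat_numeral of_nat_power)
  moreover have "0 < real n" using calculation by (smt (verit) zero_less_power)
  ultimately have "real (card A - 1) \<le> log 2 (real n)"
    by (simp add: le_log_iff powr_realpow)
  then show ?thesis using assms(1) False by (simp add: card_gt_0_iff of_nat_diff)
qed

locale list_update_instance =
  fixes e :: "nat \<Rightarrow> 'a" and a q :: "nat \<Rightarrow> real" and m :: nat and L0 :: "'a list"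
  assumes distinct_L0: "distinct L0" and elements_in_L0: "\<forall>k<m. e k \<in> set L0"
begin

abbreviation "step \<equiv> alg_step e a q m"

definition valid_state :: "'a list \<times> nat set \<Rightarrow> bool" where
  "valid_state st \<longleftrightarrow> distinct (fst st) \<and> set (fst st) = set L0"

lemma pending_element_in_list:
  "valid_state st \<Longrightarrow> k \<in> pending a m S tau \<Longrightarrow> e k \<in> set (fst st)"
  using elements_in_L0 by (auto simp: valid_state_def pending_def)

lemma due_finite: "finite (due a q m S tau)"
  unfolding due_def pending_def by auto

lemma trig_pos_ge: "k \<in> due a q m (snd st) tau \<Longrightarrow> pos (fst st) (e k) \<le> trig_pos e a q m st tau"
  unfolding trig_pos_def using due_finite by (intro Max_ge) auto

lemma trig_pos_attained:
  "due a q m (snd st) tau \<noteq> {} \<Longrightarrow>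
    \<exists>k\<in>due a q m (snd st) tau. pos (fst st) (e k) = trig_pos e a q m st tau"
proof -
  let ?P = "(\<lambda>k. pos (fst st) (e k)) ` due a q m (snd st) tau"
  assume "due a q m (snd st) tau \<noteq> {}"
  then have "Max ?P \<in> ?P" using due_finite by (intro Max_in) auto
  then show ?thesis unfolding trig_pos_def by auto
qed

lemma trig_elem_eq:
  assumes "valid_state st" "k \<in> due a q m (snd st) tau"
    and "pos (fst st) (e k) = trig_pos e a q m st tau"
  shows "trig_elem e a q m st tau = e k"
proof -
  have "e k \<in> set (fst st)"
    using pending_element_in_list[OF assms(1)] assms(2) by (auto simp: due_def)
  then show ?thesis using nth_pos assms(3) unfolding trig_elem_def by metis
qed

lemma trig_elem_facts:
  assumes "valid_state st" "due a q m (snd st) tau \<noteq> {}"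
  shows "trig_elem e a q m st tau \<in> set (fst st)"
    and "pos (fst st) (trig_elem e a q m st tau) = trig_pos e a q m st tau"
    and "trig_pos e a q m st tau \<ge> 1"
proof -
  obtain k where k: "k \<in> due a q m (snd st) tau" "pos (fst st) (e k) = trig_pos e a q m st tau"
    using trig_pos_attained[OF assms(2)] by blast
  moreover have "e k \<in> set (fst st)"
    using pending_element_in_list[OF assms(1)] k(1) by (auto simp: due_def)
  ultimately show "trig_elem e a q m st tau \<in> set (fst st)"
    and "pos (fst st) (trig_elem e a q m st tau) = trig_pos e a q m st tau"
    and "trig_pos e a q m st tau \<ge> 1"
    using trig_elem_eq[OF assms(1) k] pos_gt_0 by force+
qed

lemma step_eq:
  "due a q m (snd st) tau \<noteq> {} \<Longrightarrow> step tau st =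
     (trig_elem e a q m st tau # remove1 (trig_elem e a q m st tau) (fst st),
      snd st \<union> {k \<in> pending a m (snd st) tau.
                 pos (fst st) (e k) \<le> min (2 * trig_pos e a q m st tau - 1) (length (fst st))})"
  unfolding alg_step_def by (simp add: Let_def)

lemma served_step_mono: "snd st \<subseteq> snd (step tau st)"
  unfolding alg_step_def by (auto simp: Let_def)

lemma served_fold_step_mono: "snd st \<subseteq> snd (fold step taus st)"
  by (induction taus arbitrary: st) (simp, metis fold_Cons comp_apply order_trans served_step_mono)

lemma valid_step:
  assumes "valid_state st" shows "valid_state (step tau st)"
proof (cases "due a q m (snd st) tau = {}")
  case True
  then show ?thesis using assms by (simp add: alg_step_def)
next
  case False
  then show ?thesis using assms trig_elem_facts(1)[OF assms False]
    by (simp add: step_eq valid_state_def set_remove1_eq insert_absorb)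
qed

lemma valid_fold_step: "valid_state st \<Longrightarrow> valid_state (fold step taus st)"
  by (induction taus arbitrary: st) (auto simp: valid_step)

lemma step_serves_up_to_trig_pos:
  assumes "valid_state st" "due a q m (snd st) tau \<noteq> {}" "k \<in> pending a m (snd st) tau"
    and "pos (fst st) (e k) \<le> trig_pos e a q m st tau"
  shows "k \<in> snd (step tau st)"
  using assms trig_elem_facts(3)[OF assms(1,2)]
    pos_le_length[OF pending_element_in_list[OF assms(1,3)]]
  by (auto simp: step_eq)

lemma step_unserved_pos:
  assumes "due a q m (snd st) tau \<noteq> {}" "k \<in> pending a m (snd st) tau" "k \<notin> snd (step tau st)"
  shows "min (2 * trig_pos e a q m st tau - 1) (length (fst st)) < pos (fst st) (e k)"
  using assms by (auto simp: step_eq)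

lemma step_pos_unchanged:
  assumes valid: "valid_state st" and "k \<in> pending a m (snd st) tau" "k \<notin> snd (step tau st)"
    and behind: "pos (fst st) (e k) \<le> pos (fst st) y"
  shows "pos (fst (step tau st)) y = pos (fst st) y"
proof (cases "due a q m (snd st) tau = {}")
  case True
  then show ?thesis by (simp add: alg_step_def)
next
  case False
  let ?x = "trig_elem e a q m st tau"
  have "trig_pos e a q m st tau < pos (fst st) (e k)"
    using step_unserved_pos[OF False assms(2,3)] trig_elem_facts(3)[OF valid False]
      pos_le_length[OF pending_element_in_list[OF valid assms(2)]] by linarith
  then have "pos (fst st) ?x < pos (fst st) y"
    using trig_elem_facts(2)[OF valid False] behind by linarith
  moreover have "distinct (fst st)" using valid by (simp add: valid_state_def)
  \<comment> \<open>removing the trigger shifts y forward by one, reinserting it at the head shifts y back\<close>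
  ultimately show ?thesis
    using pos_remove1[of "fst st" ?x y] trig_elem_facts(1)[OF valid False]
    by (auto simp: step_eq[OF False])
qed

lemma fold_step_pos_unchanged:
  assumes "valid_state st" "k < m" "\<forall>tau\<in>set taus. a k \<le> tau" "k \<notin> snd (fold step taus st)"
    and "pos (fst st) (e k) \<le> pos (fst st) y"
  shows "pos (fst (fold step taus st)) y = pos (fst st) y"
  using assms
proof (induction taus arbitrary: st)
  case (Cons tau taus)
  let ?st' = "step tau st"
  have unserved: "k \<notin> snd ?st'"
    using Cons.prems(4) served_fold_step_mono[of ?st' taus] by auto
  then have "k \<in> pending a m (snd st) tau"
    using Cons.prems(2,3) served_step_mono[of st tau] by (auto simp: pending_def)
  then have "pos (fst ?st') y = pos (fst st) y" "pos (fst ?st') (e k) = pos (fst st) (e k)"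
    using step_pos_unchanged[OF Cons.prems(1) _ unserved] Cons.prems(5) by auto
  moreover have "pos (fst (fold step taus ?st')) y = pos (fst ?st') y"
    using Cons.IH[of ?st'] Cons.prems calculation valid_step by simp
  ultimately show ?case by simp
qed simp

abbreviation "after \<equiv> state_after e a q m L0"
abbreviation "before \<equiv> state_before e a q m L0"

lemma deadlines_props:
  "sorted (deadlines q m)" "distinct (deadlines q m)" "set (deadlines q m) = q ` {..<m}"
  by (simp_all add: deadlines_def)

lemma valid_after: "valid_state (after t)" and valid_before: "valid_state (before t)"
  using valid_fold_step distinct_L0
  by (simp_all add: state_after_def state_before_def valid_state_def)

lemma fold_step_filter_split:
  assumes "\<And>x y. x \<le> y \<Longrightarrow> P y \<Longrightarrow> P x" "\<And>x. P x \<Longrightarrow> Q x"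
  shows "fold step (filter Q (deadlines q m)) st
       = fold step (filter (\<lambda>x. Q x \<and> \<not> P x) (deadlines q m))
           (fold step (filter P (deadlines q m)) st)"
  by (simp add: filter_sorted_split[OF deadlines_props(1) assms])

lemma after_from_after:
  "t \<le> t' \<Longrightarrow> after t' = fold step (filter (\<lambda>x. x \<le> t' \<and> \<not> x \<le> t) (deadlines q m)) (after t)"
  unfolding state_after_def by (rule fold_step_filter_split) auto

lemma before_from_after:
  "t < t' \<Longrightarrow> before t' = fold step (filter (\<lambda>x. x < t' \<and> \<not> x \<le> t) (deadlines q m)) (after t)"
  unfolding state_after_def state_before_def by (rule fold_step_filter_split) auto

lemma after_from_before: "after tau = fold step (filter (\<lambda>x. x = tau) (deadlines q m)) (before tau)"
proof -
  have "after tau = fold step (filter (\<lambda>x. x \<le> tau \<and> \<not> x < tau) (deadlines q m)) (before tau)"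
    unfolding state_after_def state_before_def by (rule fold_step_filter_split) auto
  moreover have "filter (\<lambda>x. x \<le> tau \<and> \<not> x < tau) (deadlines q m)
      = filter (\<lambda>x. x = tau) (deadlines q m)"
    by (rule filter_cong) auto
  ultimately show ?thesis by simp
qed

lemma after_deadline: "tau \<in> q ` {..<m} \<Longrightarrow> after tau = step tau (before tau)"
  using filter_eq_singleton[OF deadlines_props(2)]
  by (simp add: deadlines_props(3) after_from_before)

lemma served_after_mono: "t \<le> t' \<Longrightarrow> snd (after t) \<subseteq> snd (after t')"
  using after_from_after served_fold_step_mono by metis

lemma served_after_before: "t < t' \<Longrightarrow> snd (after t) \<subseteq> snd (before t')"
  using before_from_after served_fold_step_mono by metis

lemma served_before_after: "snd (before tau) \<subseteq> snd (after tau)"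
  using after_from_before served_fold_step_mono by metis

lemma pos_unchanged_from_after:
  assumes "k \<in> pending a m (snd (after t)) t" "set taus \<subseteq> {t<..}"
    and "k \<notin> snd (fold step taus (after t))"
    and "pos (fst (after t)) (e k) \<le> pos (fst (after t)) y"
  shows "pos (fst (fold step taus (after t))) y = pos (fst (after t)) y"
  using assms by (intro fold_step_pos_unchanged valid_after) (force simp: pending_def)+

lemma pos_before_unchanged:
  assumes "k \<in> pending a m (snd (after t)) t" "t < tau" "k \<notin> snd (before tau)"
    and "pos (fst (after t)) (e k) \<le> pos (fst (after t)) y"
  shows "pos (fst (before tau)) y = pos (fst (after t)) y"
  using assms(3) unfolding before_from_after[OF assms(2)]
  by (intro pos_unchanged_from_after[OF assms(1) _ _ assms(4)]) auto

lemma pos_after_unchanged: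
  assumes "k \<in> pending a m (snd (after t)) t" "t \<le> tau" "k \<notin> snd (after tau)"
    and "pos (fst (after t)) (e k) \<le> pos (fst (after t)) y"
  shows "pos (fst (after tau)) y = pos (fst (after t)) y"
  using assms(3) unfolding after_from_after[OF assms(2)]
  by (intro pos_unchanged_from_after[OF assms(1) _ _ assms(4)]) auto

end

locale all_requests_triggering = list_update_instance +
  fixes ch :: "real \<Rightarrow> nat set \<Rightarrow> nat"
  assumes ch_in: "\<forall>tau S. S \<noteq> {} \<longrightarrow> ch tau S \<in> S"
    and all_triggering: "\<forall>k<m. k \<in> triggering e a q m L0 ch"
begin

definition candidates :: "real \<Rightarrow> nat set" where
  "candidates tau =
     {k \<in> due a q m (snd (before tau)) tau. e k = trig_elem e a q m (before tau) tau}"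

lemma chosen_at_own_deadline: "k < m \<Longrightarrow> k \<in> candidates (q k) \<and> ch (q k) (candidates (q k)) = k"
proof -
  assume "k < m"
  then have "\<exists>tau. k = ch tau (candidates tau) \<and> due a q m (snd (before tau)) tau \<noteq> {}"
    using all_triggering unfolding triggering_def candidates_def by blast
  then obtain tau where tau: "k = ch tau (candidates tau)" "due a q m (snd (before tau)) tau \<noteq> {}"
    by blast
  obtain k' where "k' \<in> due a q m (snd (before tau)) tau"
      "pos (fst (before tau)) (e k') = trig_pos e a q m (before tau) tau"
    using trig_pos_attained[OF tau(2)] by blast
  then have "k' \<in> candidates tau"
    using trig_elem_eq[OF valid_before] by (simp add: candidates_def)
  then have "k \<in> candidates tau" using ch_in tau(1) by blast
  moreover from this have "q k = tau" by (simp add: candidates_def due_def)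
  ultimately show ?thesis using tau(1) by simp
qed

lemma inj_on_deadlines: "inj_on q {..<m}"
  by (intro inj_onI) (metis chosen_at_own_deadline lessThan_iff)

lemma due_at_deadline: "k < m \<Longrightarrow> k \<in> due a q m (snd (before (q k))) (q k)"
  and trig_elem_at_deadline: "k < m \<Longrightarrow> trig_elem e a q m (before (q k)) (q k) = e k"
  using chosen_at_own_deadline by (auto simp: candidates_def)

lemma trig_pos_at_deadline:
  "k < m \<Longrightarrow> trig_pos e a q m (before (q k)) (q k) = pos (fst (before (q k))) (e k)"
  using trig_elem_facts(2)[OF valid_before] due_at_deadline trig_elem_at_deadline by force

lemma unserved_before_deadline: "k < m \<Longrightarrow> k \<notin> snd (before (q k))"
  using due_at_deadline by (simp add: due_def pending_def)

lemma served_at_deadline: "k < m \<Longrightarrow> q k \<le> t \<Longrightarrow> k \<in> snd (after t)"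
proof -
  assume "k < m" "q k \<le> t"
  have "k \<in> snd (step (q k) (before (q k)))"
    using due_at_deadline[OF \<open>k < m\<close>] trig_pos_ge
    by (intro step_serves_up_to_trig_pos valid_before) (auto simp: due_def)
  then show ?thesis
    using after_deadline served_after_mono[OF \<open>q k \<le> t\<close>] \<open>k < m\<close> by auto
qed

lemma moved_to_front_at_deadline:
  assumes "k < m" shows "pos (fst (after (q k))) (e k) = 1"
proof -
  have "due a q m (snd (before (q k))) (q k) \<noteq> {}" using due_at_deadline[OF assms] by blast
  then show ?thesis
    using assms trig_elem_at_deadline[OF assms] by (simp add: after_deadline step_eq)
qed

abbreviation "pending_at t \<equiv> pending a m (snd (after t)) t"
abbreviation "pos_at t k \<equiv> pos (fst (after t)) (e k)"

lemma pending_at_before_deadline: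
  "k \<in> pending_at t \<Longrightarrow> k < m \<and> a k \<le> t \<and> k \<notin> snd (after t) \<and> t < q k"
  by (auto simp: pending_def) (meson not_less served_at_deadline)

lemma pos_at_bounds: "k \<in> pending_at t \<Longrightarrow> pos_at t k \<in> {1..length L0}"
proof -
  assume "k \<in> pending_at t"
  then have "e k \<in> set (fst (after t))" by (rule pending_element_in_list[OF valid_after])
  moreover have "length (fst (after t)) = length L0"
    using valid_after distinct_L0 by (metis valid_state_def distinct_card)
  ultimately show ?thesis
    using pos_gt_0[of "e k" "fst (after t)"] pos_le_length[of "e k" "fst (after t)"]
    by (simp add: Suc_le_eq)
qed

lemma pending_at_earlier_deadline:
  assumes "k \<in> pending_at t" "k' \<in> pending_at t" "q k < q k'"
  shows "k' \<notin> snd (after (q k))" and "k' \<in> pending a m (snd (before (q k))) (q k)"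
proof -
  have "k' < m" "a k' \<le> t" "t < q k" using pending_at_before_deadline assms(1,2) by auto
  then show "k' \<notin> snd (after (q k))"
    using unserved_before_deadline served_after_before[OF assms(3)] by blast
  then show "k' \<in> pending a m (snd (before (q k))) (q k)"
    using served_before_after \<open>k' < m\<close> \<open>a k' \<le> t\<close> \<open>t < q k\<close> by (auto simp: pending_def)
qed

lemma pending_at_distinct_elements:
  assumes "k \<in> pending_at t" "k' \<in> pending_at t" "q k < q k'"
  shows "e k \<noteq> e k'"
proof
  assume same: "e k = e k'"
  have "k < m" using assms(1) pending_at_before_deadline by blast
  have "k' \<in> snd (step (q k) (before (q k)))"
    using due_at_deadline[OF \<open>k < m\<close>] trig_pos_ge[OF due_at_deadline[OF \<open>k < m\<close>]] same
    by (intro step_serves_up_to_trig_pos valid_before pending_at_earlier_deadline(2)[OF assms]) auto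
  then show False
    using pending_at_earlier_deadline(1)[OF assms] after_deadline \<open>k < m\<close> by auto
qed

lemma inj_on_pos_at: "inj_on (pos_at t) (pending_at t)"
proof (rule inj_onI)
  fix k k' assume k: "k \<in> pending_at t" and k': "k' \<in> pending_at t" and "pos_at t k = pos_at t k'"
  then have "e k = e k'"
    using pending_element_in_list[OF valid_after] pos_eq_iff by metis
  then have "q k = q k'"
    using pending_at_distinct_elements[OF k k'] pending_at_distinct_elements[OF k' k] by fastforce
  then show "k = k'"
    using inj_on_deadlines pending_at_before_deadline k k' by (meson inj_onD lessThan_iff)
qed

lemma pending_at_deadline_order:
  assumes k: "k \<in> pending_at t" and k': "k' \<in> pending_at t" and less: "pos_at t k < pos_at t k'"
  shows "q k < q k'"
proof (rule ccontr)
  assume "\<not> q k < q k'"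
  moreover have "q k \<noteq> q k'"
  proof
    assume "q k = q k'"
    then have "k = k'"
      using inj_on_deadlines pending_at_before_deadline[OF k] pending_at_before_deadline[OF k']
      by (auto dest: inj_onD)
    then show False using less by simp
  qed
  ultimately have "q k' < q k" by linarith
  then have "k \<notin> snd (after (q k'))"
    using pending_at_earlier_deadline(1)[OF k' k] by blast
  then have "pos (fst (after (q k'))) (e k') = pos_at t k'"
    using pos_after_unchanged[OF k] pending_at_before_deadline[OF k'] less by simp
  then have "pos_at t k' = 1"
    using moved_to_front_at_deadline pending_at_before_deadline[OF k'] by simp
  then show False using less pos_at_bounds[OF k] by simp
qed

lemma pending_at_pos_doubling:
  assumes k: "k \<in> pending_at t" and k': "k' \<in> pending_at t" and less: "pos_at t k < pos_at t k'"
  shows "2 * pos_at t k \<le> pos_at t k'"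
proof -
  let ?st = "before (q k)"
  have "k < m" "t < q k" using pending_at_before_deadline[OF k] by auto
  have unserved: "k \<notin> snd ?st" by (rule unserved_before_deadline[OF \<open>k < m\<close>])
  have "pos (fst ?st) (e k) = pos_at t k" "pos (fst ?st) (e k') = pos_at t k'"
    using pos_before_unchanged[OF k \<open>t < q k\<close> unserved] less by auto
  moreover have "length (fst ?st) = length L0"
    using valid_before distinct_L0 by (metis valid_state_def distinct_card)
  moreover have "min (2 * trig_pos e a q m ?st (q k) - 1) (length (fst ?st)) < pos (fst ?st) (e k')"
  proof (rule step_unserved_pos)
    show "due a q m (snd ?st) (q k) \<noteq> {}" using due_at_deadline[OF \<open>k < m\<close>] by blast
    show "k' \<in> pending a m (snd ?st) (q k)" "k' \<notin> snd (step (q k) ?st)"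
      using pending_at_earlier_deadline[OF k k' pending_at_deadline_order[OF assms]]
        after_deadline[of "q k"] \<open>k < m\<close> by auto
  qed
  ultimately show ?thesis
    using trig_pos_at_deadline[OF \<open>k < m\<close>] pos_at_bounds[OF k] pos_at_bounds[OF k'] by auto
qed

lemma card_pending_at_le_log: "real (card (pending_at t)) \<le> log 2 (real (length L0)) + 1"
proof -
  have "real (card (pos_at t ` pending_at t)) \<le> log 2 (real (length L0)) + 1"
    using pos_at_bounds pending_at_pos_doubling
    by (intro card_le_log_if_doubling) (auto simp: pending_def)
  then show ?thesis by (simp add: card_image[OF inj_on_pos_at])
qed

end

theorem mainTheorem6:
  fixes L0 :: "'a list" and n m :: nat
    and e :: "nat \<Rightarrow> 'a" and a q :: "nat \<Rightarrow> real"
    and ch :: "real \<Rightarrow> nat set \<Rightarrow> nat" and t :: real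
  assumes "distinct L0" and "length L0 = n"
    and "\<forall>k<m. e k \<in> set L0 \<and> a k \<le> q k"
    and "\<forall>tau S. S \<noteq> {} \<longrightarrow> ch tau S \<in> S"
    and "\<forall>k<m. k \<in> triggering e a q m L0 ch"
  shows "let L = fst (state_after e a q m L0 t);
             R = pending a m (snd (state_after e a q m L0 t)) t;
             x = (\<lambda>k. pos L (e k))
         in inj_on x R
            \<and> (\<forall>k\<in>R. \<forall>k'\<in>R. x k < x k' \<and> \<not> (\<exists>k''\<in>R. x k < x k'' \<and> x k'' < x k')
                  \<longrightarrow> q k \<le> q k' \<and> 2 * x k \<le> x k')
            \<and> real (card R) \<le> log 2 (real n) + 1"
proof -
  interpret all_requests_triggering e a q m L0 ch
    using assms by unfold_locales auto
  show ?thesis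
    unfolding Let_def
    using inj_on_pos_at card_pending_at_le_log pending_at_deadline_order pending_at_pos_doubling
      \<open>length L0 = n\<close> by (auto intro: less_imp_le)
qed

end
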